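(* Let $B\in\mathbb{S}_{2n}$ be an involution without fixed points with $n\ge2$ (an arc diagram with more than one arc). Then $\pi(B)=\pi'(B)$ in $\mathcal{A}$; in particular $\pi'(B)$ is a linear combination of classes of fixed-point-free involutions (the coefficients of all products containing classes of permutations with fixed points vanish).
   Context: A permutation $\alpha\in\mathbb{S}_m$ is connected if no proper nonempty subinterval $\{k+1,\dots,n\}\subsetneq[m]$ is invariant under $\alpha$. Two connected $\alpha_1,\alpha_2\in\mathbb{S}_m$ are rotationally equivalent if $\alpha_2=\sigma_m^{-k}\alpha_1\sigma_m^k$ for some $k$, $\sigma_m=(1,\dots,m)$. Every $\alpha\in\mathbb{S}_m$ determines a multiset of connected permutations recursively: $\{\alpha\}$ if $\alpha$ is connected; otherwise, for an invariant proper subinterval $I$, the union of the multisets for $\alpha|_I$ and $\alpha|_{[m]\setminus I}$. $\mathcal{A}$ is the free commutative (polynomial) algebra generated by rotational equivalence classes of connected permutations, and $[\alpha]\in\mathcal{A}$ denotes the product of the classes in the multiset of $\alpha$ ($[\text{empty}]=1$). For $R\subset[m]$, $\alpha|_R$ is the permutation of $R$ sending $r$ to the first element of $\alpha(r),\alpha^2(r),\dots$ lying in $R$, identified with $\mathbb{S}_{|R|}$ by the order-preserving bijection. For $\alpha\in\mathbb{S}_m$ with set of cycles $V(\alpha)$: $\pi(\alpha)=\sum_{k\ge1}(-1)^{k-1}(k-1)!\sum_{\{I_1,\dots,I_k\}}[\alpha|_{I_1}]\cdots[\alpha|_{I_k}]$, over unordered partitions of $V(\alpha)$ into $k$ nonempty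 blocks, $\alpha|_{I}$ meaning restriction to the union of the cycles in $I$; $\pi'(\alpha)=\sum_{k\ge1}(-1)^{k-1}(k-1)!\sum_{\{L_1,\dots,L_k\}}[\alpha|_{L_1}]\cdots[\alpha|_{L_k}]$, over unordered partitions of $[m]$ into $k$ nonempty blocks. *)

theory Defs
  imports "HOL-Combinatorics.Permutations" "HOL-Library.Multiset" "HOL-Library.Disjoint_Sets"
begin

text \<open>A permutation of [m] = {1..m} is a pair (m, p) with p permuting {1..m}
  (identity outside). \<close>

type_synonym perm = "nat \<times> (nat \<Rightarrow> nat)"

definition is_perm :: "perm \<Rightarrow> bool" where
  "is_perm a \<longleftrightarrow> snd a permutes {1..fst a}"

definition inv_interval :: "perm \<Rightarrow> nat set \<Rightarrow> bool" where
  "inv_interval a I \<longleftrightarrow> (\<exists>k n. I = {k+1..n}) \<and> I \<noteq> {} \<and> I \<subset> {1..fst a}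
      \<and> snd a ` I \<subseteq> I"

definition connected_perm :: "perm \<Rightarrow> bool" where
  "connected_perm a \<longleftrightarrow> \<not> (\<exists>I. inv_interval a I)"

text \<open>Order-preserving standardisation of a permutation q of a finite set R
  to a permutation of {1..card R}.\<close>
definition std :: "nat set \<Rightarrow> (nat \<Rightarrow> nat) \<Rightarrow> perm" where
  "std R q = (card R, (\<lambda>i. if i \<in> {1..card R}
       then card {x\<in>R. x < q (sorted_list_of_set R ! (i - 1))} + 1 else i))"

definition first_return :: "(nat \<Rightarrow> nat) \<Rightarrow> nat set \<Rightarrow> nat \<Rightarrow> nat" where
  "first_return p R r = (p ^^ (LEAST k. 0 < k \<and> (p ^^ k) r \<in> R)) r"

definition restr :: "perm \<Rightarrow> nat set \<Rightarrow> perm" where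
  "restr a R = std R (first_return (snd a) R)"

text \<open>The multiset of connected permutations determined by a permutation
  (computed with enough fuel: the recursion depth is at most m).\<close>
fun comps_aux :: "nat \<Rightarrow> perm \<Rightarrow> perm multiset" where
  "comps_aux 0 a = {#}"
| "comps_aux (Suc f) a =
     (if fst a = 0 then {#}
      else if connected_perm a then {#a#}
      else (let I = (SOME I. inv_interval a I)
            in comps_aux f (restr a I) + comps_aux f (restr a ({1..fst a} - I))))"

definition comps :: "perm \<Rightarrow> perm multiset" where
  "comps a = comps_aux (Suc (fst a)) a"

definition rot :: "nat \<Rightarrow> nat \<Rightarrow> nat" where
  "rot m i = (if 1 \<le> i \<and> i < m then i + 1 else if i = m \<and> m \<ge> 1 then 1 else i)"

definition rot_inv :: "nat \<Rightarrow> nat \<Rightarrow> nat" where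
  "rot_inv m i = (if 1 < i \<and> i \<le> m then i - 1 else if i = 1 \<and> m \<ge> 1 then m else i)"

text \<open>Rotational equivalence class of a (connected) permutation: a generator of A.\<close>
definition rotclass :: "perm \<Rightarrow> perm set" where
  "rotclass a = {(fst a, (rot_inv (fst a) ^^ k) \<circ> snd a \<circ> (rot (fst a) ^^ k)) | k. True}"

text \<open>[alpha]: the monomial (product of classes), represented as a multiset of generators.\<close>
definition bracket :: "perm \<Rightarrow> perm set multiset" where
  "bracket a = image_mset rotclass (comps a)"

text \<open>Elements of the free commutative algebra A (over Z) are represented by their
  coefficient functions on monomials (multisets of generators).\<close>
type_synonym algA = "perm set multiset \<Rightarrow> int"

definition cycles :: "perm \<Rightarrow> nat set set" where
  "cycles a = {{(snd a ^^ k) x | k. True} | x. x \<in> {1..fst a}}"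

definition pi_A :: "perm \<Rightarrow> algA" where
  "pi_A a N = (\<Sum>P\<in>{P. partition_on (cycles a) P}.
      (-1) ^ (card P - 1) * int (fact (card P - 1)) *
      (if (\<Sum>I\<in>P. bracket (restr a (\<Union>I))) = N then 1 else 0))"

definition pi'_A :: "perm \<Rightarrow> algA" where
  "pi'_A a N = (\<Sum>P\<in>{P. partition_on {1..fst a} P}.
      (-1) ^ (card P - 1) * int (fact (card P - 1)) *
      (if (\<Sum>L\<in>P. bracket (restr a L)) = N then 1 else 0))"

definition fpf_involution :: "perm \<Rightarrow> bool" where
  "fpf_involution a \<longleftrightarrow> is_perm a \<and> (\<forall>x. snd a (snd a x) = x)
      \<and> (\<forall>x\<in>{1..fst a}. snd a x \<noteq> x)"

end

theory Submission
  imports Defs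
begin

text \<open>Restricting \<open>B\<close> to a set \<open>S\<close> of points gives an involution of \<open>S\<close> in which the arcs
  leaving \<open>S\<close> become fixed points; after standardisation this is \<open>restr (m, B) S\<close>. Its
  connected components can be read off from any \<open>B\<close>-stable interval \<open>T\<close> of \<open>S\<close>: the
  components of \<open>S\<close> are those of \<open>T\<close> together with those of \<open>S - T\<close>, by a diamond argument
  against the interval chosen in the definition of \<open>comps\<close>.

  Partitions of the set of cycles correspond to the partitions of the points that split
  no arc, so \<open>pi' - pi\<close> is the sum over the partitions splitting some arc. Group these by the
  least point \<open>a\<close> whose arc \<open>{a, B a}\<close> is split and by the partition \<open>P'\<close> left after deleting
  \<open>a\<close> and \<open>B a\<close>. Both points are unpaired in their blocks, so the monomial of every partition
  in the group is that of \<open>P'\<close> times two one-point classes, and the weights in the group cancel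
  because \<open>moebius (r + 1) + r * moebius r = 0\<close>. Finally, the blocks of a partition splitting no
  arc are \<open>B\<close>-closed, so all their components are fixed-point-free involutions.\<close>

section \<open>Order-preserving standardisation\<close>

definition unrank :: "'a::linorder set \<Rightarrow> nat \<Rightarrow> 'a" where
  "unrank R i = sorted_list_of_set R ! (i - 1)"

definition rank :: "'a::linorder set \<Rightarrow> 'a \<Rightarrow> nat" where
  "rank R x = card {y\<in>R. y < x} + 1"

lemma card_less_sorted_list_of_set_nth:
  assumes "finite R" "i < card R"
  shows "card {y\<in>R. y < sorted_list_of_set R ! i} = i"
proof -
  let ?xs = "sorted_list_of_set R"
  have sorted: "sorted_wrt (<) ?xs" and len: "length ?xs = card R" and set: "set ?xs = R"
    using assms(1) by auto
  have less_iff: "?xs ! j < ?xs ! i \<longleftrightarrow> j < i" if "j < card R" for j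
  proof
    assume less: "?xs ! j < ?xs ! i"
    show "j < i"
    proof (rule ccontr)
      assume "\<not> j < i"
      then have "i < j \<or> i = j" by auto
      then show False
        using less sorted_wrt_nth_less[OF sorted, of i j] that len by auto
    qed
  next
    assume "j < i"
    then show "?xs ! j < ?xs ! i"
      using sorted_wrt_nth_less[OF sorted, of j i] assms(2) len by auto
  qed
  have "{y\<in>R. y < ?xs ! i} = (!) ?xs ` {..<i}"
  proof
    show "{y\<in>R. y < ?xs ! i} \<subseteq> (!) ?xs ` {..<i}"
    proof
      fix y
      assume y: "y \<in> {y\<in>R. y < ?xs ! i}"
      then obtain j where "j < card R" "y = ?xs ! j"
        using set len by (metis (no_types, lifting) in_set_conv_nth mem_Collect_eq)
      then show "y \<in> (!) ?xs ` {..<i}"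
        using less_iff y by auto
    qed
    show "(!) ?xs ` {..<i} \<subseteq> {y\<in>R. y < ?xs ! i}"
      using less_iff assms(2) len set by auto
  qed
  moreover have "inj_on ((!) ?xs) {..<i}"
    using assms len by (auto simp: inj_on_def nth_eq_iff_index_eq)
  ultimately show ?thesis
    by (simp add: card_image)
qed

lemma unrank_in:
  assumes "finite R" "i \<in> {1..card R}"
  shows "unrank R i \<in> R"
proof -
  have "sorted_list_of_set R ! (i - 1) \<in> set (sorted_list_of_set R)"
    by (rule nth_mem) (use assms in auto)
  then show ?thesis
    using assms(1) by (simp add: unrank_def)
qed

lemma rank_unrank: "finite R \<Longrightarrow> i \<in> {1..card R} \<Longrightarrow> rank R (unrank R i) = i"
  unfolding unrank_def rank_def using card_less_sorted_list_of_set_nth[of R "i - 1"] by auto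

lemma rank_in:
  assumes "finite R" "x \<in> R"
  shows "rank R x \<in> {1..card R}"
proof -
  have "card {y\<in>R. y < x} < card R"
    using assms by (intro psubset_card_mono) auto
  then show ?thesis
    by (simp add: rank_def)
qed

lemma unrank_rank:
  assumes "finite R" "x \<in> R"
  shows "unrank R (rank R x) = x"
proof -
  have "x \<in> set (sorted_list_of_set R)"
    using assms by simp
  then obtain j where j: "j < length (sorted_list_of_set R)" "sorted_list_of_set R ! j = x"
    unfolding in_set_conv_nth by blast
  then show ?thesis
    unfolding unrank_def rank_def using card_less_sorted_list_of_set_nth[OF assms(1), of j] assms(1) by auto
qed

lemma bij_betw_unrank: "bij_betw (unrank R) {1..card R} R" if "finite R"
proof (rule bij_betw_byWitness[where f' = "rank R"])
  show "rank R ` R \<subseteq> {1..card R}"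
    using rank_in[OF that] by blast
  show "unrank R ` {1..card R} \<subseteq> R"
    using unrank_in[OF that] by blast
qed (simp_all add: that rank_unrank unrank_rank)

lemma strict_mono_on_rank: "finite R \<Longrightarrow> strict_mono_on R (rank R)"
  unfolding rank_def by (rule strict_mono_onI) (auto intro!: psubset_card_mono)

lemma strict_mono_on_unrank: "finite R \<Longrightarrow> strict_mono_on {1..card R} (unrank R)"
  by (rule strict_mono_onI)
    (metis rank_unrank unrank_in strict_mono_on_less_eq[OF strict_mono_on_rank] not_less)

lemma rank_image:
  assumes "strict_mono_on I h" "x \<in> I"
  shows "rank (h ` I) (h x) = rank I x"
proof -
  have "{y\<in>h ` I. y < h x} = h ` {y\<in>I. y < x}"
    using strict_mono_on_less[OF assms(1)] assms(2) by auto
  moreover have "inj_on h {y\<in>I. y < x}"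
    using strict_mono_on_imp_inj_on[OF assms(1)] by (rule inj_on_subset) auto
  ultimately show ?thesis
    unfolding rank_def by (simp add: card_image)
qed

lemma unrank_image:
  assumes "finite I" "strict_mono_on I h" "i \<in> {1..card I}"
  shows "unrank (h ` I) i = h (unrank I i)"
  using rank_image[OF assms(2) unrank_in[OF assms(1,3)]] unrank_rank[of "h ` I" "h (unrank I i)"]
    rank_unrank[OF assms(1,3)] unrank_in[OF assms(1,3)] assms(1) by simp

lemma std_eq: "std R q = (card R, \<lambda>i. if i \<in> {1..card R} then rank R (q (unrank R i)) else i)"
  unfolding std_def rank_def unrank_def by simp

lemma fst_std [simp]: "fst (std R q) = card R"
  by (simp add: std_eq)

lemma snd_std: "i \<in> {1..card R} \<Longrightarrow> snd (std R q) i = rank R (q (unrank R i))"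
  by (simp add: std_eq)

lemma snd_std_outside: "i \<notin> {1..card R} \<Longrightarrow> snd (std R q) i = i"
  by (auto simp: std_eq)

lemma std_cong:
  assumes "finite R" "\<And>x. x \<in> R \<Longrightarrow> q x = q' x"
  shows "std R q = std R q'"
  unfolding std_eq using assms unrank_in[OF assms(1)] by auto

lemma std_transport:
  assumes "finite I" "strict_mono_on I h"
    and "\<And>i. i \<in> I \<Longrightarrow> q' i \<in> I" "\<And>i. i \<in> I \<Longrightarrow> h (q' i) = q (h i)"
  shows "std I q' = std (h ` I) q"
proof -
  have "card (h ` I) = card I"
    using card_image strict_mono_on_imp_inj_on[OF assms(2)] by blast
  moreover have "rank (h ` I) (q (unrank (h ` I) i)) = rank I (q' (unrank I i))"
    if "i \<in> {1..card I}" for i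
  proof -
    have x: "unrank I i \<in> I"
      using unrank_in assms(1) that by blast
    then have "q (unrank (h ` I) i) = h (q' (unrank I i))"
      using unrank_image[OF assms(1,2) that] assms(4) by simp
    then show ?thesis
      using rank_image[OF assms(2) assms(3)[OF x]] by simp
  qed
  ultimately show ?thesis
    unfolding std_eq by auto
qed

lemma snd_std_in:
  assumes "finite R" "q ` R \<subseteq> R" "i \<in> {1..card R}"
  shows "snd (std R q) i \<in> {1..card R}"
  using snd_std[OF assms(3)] rank_in[OF assms(1)] unrank_in[OF assms(1,3)] assms(2) by auto

lemma snd_std_involution:
  assumes "finite R" "\<And>x. x \<in> R \<Longrightarrow> q x \<in> R" "\<And>x. x \<in> R \<Longrightarrow> q (q x) = x"
  shows "snd (std R q) (snd (std R q) i) = i"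
proof (cases "i \<in> {1..card R}")
  case True
  define x where "x = unrank R i"
  have x: "x \<in> R"
    unfolding x_def using unrank_in[OF assms(1) True] .
  have "snd (std R q) (snd (std R q) i) = rank R (q (unrank R (rank R (q x))))"
    using snd_std[OF True] snd_std[OF rank_in[OF assms(1) assms(2)[OF x]]] x_def by simp
  also have "\<dots> = i"
    using unrank_rank[OF assms(1) assms(2)[OF x]] assms(3)[OF x] rank_unrank[OF assms(1) True] x_def
    by simp
  finally show ?thesis .
qed (simp add: snd_std_outside)

lemma fpf_involution_std:
  assumes "finite R" "\<And>x. x \<in> R \<Longrightarrow> q x \<in> R" "\<And>x. x \<in> R \<Longrightarrow> q (q x) = x"
    and "\<And>x. x \<in> R \<Longrightarrow> q x \<noteq> x"
  shows "fpf_involution (std R q)"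
proof -
  let ?p = "snd (std R q)"
  have inv: "?p (?p i) = i" for i
    using snd_std_involution[OF assms(1-3)] .
  have "q ` R \<subseteq> R"
    using assms(2) by blast
  then have "?p ` {1..card R} \<subseteq> {1..card R}"
    using snd_std_in[OF assms(1)] by blast
  then have "bij_betw ?p {1..card R} {1..card R}"
    using inv by (intro bij_betw_byWitness[where f' = ?p]) auto
  then have "?p permutes {1..card R}"
    by (rule bij_imp_permutes) (simp add: snd_std_outside)
  moreover have "?p i \<noteq> i" if i: "i \<in> {1..card R}" for i
  proof
    assume "?p i = i"
    then have "rank R (q (unrank R i)) = rank R (unrank R i)"
      using snd_std[OF i] rank_unrank[OF assms(1) i] by simp
    then show False
      using strict_mono_on_eq[OF strict_mono_on_rank[OF assms(1)]] assms(2,4) unrank_in[OF assms(1) i]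
      by blast
  qed
  ultimately show ?thesis
    unfolding fpf_involution_def is_perm_def using inv by simp
qed

abbreviation point_perm :: perm where
  "point_perm \<equiv> (1, \<lambda>i. i)"

lemma std_singleton: "q j = j \<Longrightarrow> std {j} q = point_perm"
  by (auto simp: std_eq rank_def unrank_def)

lemma first_return_involution:
  assumes "f (f x) = x" "x \<in> R"
  shows "first_return f R x = (if f x \<in> R then f x else x)"
proof (cases "f x \<in> R")
  case True
  have "(LEAST k. 0 < k \<and> (f ^^ k) x \<in> R) = 1"
    by (rule Least_equality) (use True in auto)
  then show ?thesis
    unfolding first_return_def using True by simp
next
  case False
  have "(LEAST k. 0 < k \<and> (f ^^ k) x \<in> R) = 2"
  proof (rule Least_equality)
    show "0 < (2::nat) \<and> (f ^^ 2) x \<in> R"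
      using assms by (simp add: numeral_2_eq_2)
    show "2 \<le> k" if "0 < k \<and> (f ^^ k) x \<in> R" for k
      using that False by (cases "k = 1") auto
  qed
  then show ?thesis
    unfolding first_return_def using False assms by (simp add: numeral_2_eq_2)
qed

section \<open>Invariant intervals and connected components\<close>

definition convex_in :: "'a::linorder set \<Rightarrow> 'a set \<Rightarrow> bool" where
  "convex_in R T \<longleftrightarrow> (\<forall>x\<in>R. \<forall>y\<in>R. \<forall>z\<in>R. x < y \<longrightarrow> y < z \<longrightarrow> x \<in> T \<longrightarrow> z \<in> T \<longrightarrow> y \<in> T)"

lemma convex_inD:
  "convex_in R T \<Longrightarrow> x \<in> R \<Longrightarrow> y \<in> R \<Longrightarrow> z \<in> R \<Longrightarrow> x < y \<Longrightarrow> y < z \<Longrightarrow> x \<in> T \<Longrightarrow> z \<in> T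
    \<Longrightarrow> y \<in> T"
  unfolding convex_in_def by blast

definition invariant_in :: "'a::linorder set \<Rightarrow> ('a \<Rightarrow> 'a) \<Rightarrow> 'a set \<Rightarrow> bool" where
  "invariant_in R q T \<longleftrightarrow> T \<subseteq> R \<and> convex_in R T \<and> q ` T \<subseteq> T"

lemma convex_in_image:
  assumes "strict_mono_on A h" "J \<subseteq> A"
  shows "convex_in (h ` A) (h ` J) \<longleftrightarrow> convex_in A J"
proof -
  have "h x \<in> h ` J \<longleftrightarrow> x \<in> J" if "x \<in> A" for x
    using inj_on_image_mem_iff[OF strict_mono_on_imp_inj_on[OF assms(1)] that assms(2)] .
  then show ?thesis
    unfolding convex_in_def using strict_mono_on_less[OF assms(1)] by auto
qed

lemma convex_in_eq_Min_Max:
  assumes convex: "convex_in A I" and I: "I \<subseteq> A" "finite I" "I \<noteq> {}"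
  shows "I = {Min I..Max I} \<inter> A"
proof
  have min_max: "Min I \<in> I" "Max I \<in> I"
    using I by simp_all
  show "{Min I..Max I} \<inter> A \<subseteq> I"
  proof
    fix y
    assume y: "y \<in> {Min I..Max I} \<inter> A"
    show "y \<in> I"
    proof (cases "Min I < y \<and> y < Max I")
      case True
      then show ?thesis
        using convex_inD[OF convex _ _ _ _ _ min_max] min_max I(1) y by blast
    next
      case False
      then have "y = Min I \<or> y = Max I"
        using y by auto
      then show ?thesis
        using min_max by auto
    qed
  qed
qed (use I in auto)

lemma interval_iff_convex_in:
  assumes "I \<subseteq> {1..N}"
  shows "(\<exists>k m. I = {k+1..m}) \<longleftrightarrow> convex_in {1..N} (I :: nat set)"
proof
  assume "\<exists>k m. I = {k+1..m}"
  then show "convex_in {1..N} I"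
    unfolding convex_in_def by auto
next
  assume convex: "convex_in {1..N} I"
  show "\<exists>k m. I = {k+1..m}"
  proof (cases "I = {}")
    case True
    then show ?thesis
      by (intro exI[of _ 1] exI[of _ 0]) simp
  next
    case False
    have "finite I"
      using assms finite_subset by blast
    then have eq: "I = {Min I..Max I} \<inter> {1..N}" and "Min I \<in> I" "Max I \<in> I"
      using convex_in_eq_Min_Max[OF convex assms] False by simp_all
    then have "Min I \<ge> 1" "Max I \<le> N"
      using assms by auto
    then have "{Min I..Max I} \<inter> {1..N} = {Min I - 1 + 1..Max I}"
      by auto
    then show ?thesis
      using eq by blast
  qed
qed

lemma std_image_subset_iff:
  assumes "finite R" "q ` R \<subseteq> R" "I \<subseteq> {1..card R}"
  shows "snd (std R q) ` I \<subseteq> I \<longleftrightarrow> q ` unrank R ` I \<subseteq> unrank R ` I"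
proof
  assume stable: "snd (std R q) ` I \<subseteq> I"
  show "q ` unrank R ` I \<subseteq> unrank R ` I"
  proof clarify
    fix i
    assume i: "i \<in> I"
    then have "rank R (q (unrank R i)) \<in> I"
      using stable snd_std assms(3) by (metis image_subset_iff subsetD)
    moreover have "q (unrank R i) \<in> R"
      using unrank_in[OF assms(1)] assms(2,3) i by blast
    ultimately show "q (unrank R i) \<in> unrank R ` I"
      using unrank_rank[OF assms(1)] by (metis imageI)
  qed
next
  assume stable: "q ` unrank R ` I \<subseteq> unrank R ` I"
  show "snd (std R q) ` I \<subseteq> I"
  proof clarify
    fix i
    assume i: "i \<in> I"
    then obtain j where "j \<in> I" "q (unrank R i) = unrank R j"
      using stable by blast
    then show "snd (std R q) i \<in> I"
      using snd_std rank_unrank[OF assms(1)] assms(3) i by (metis subsetD)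
  qed
qed

lemma inv_interval_std_iff:
  assumes "finite R" "q ` R \<subseteq> R"
  shows "inv_interval (std R q) I \<longleftrightarrow>
    I \<subseteq> {1..card R} \<and> unrank R ` I \<noteq> {} \<and> unrank R ` I \<noteq> R \<and> invariant_in R q (unrank R ` I)"
proof (cases "I \<subseteq> {1..card R}")
  case True
  have bij: "bij_betw (unrank R) {1..card R} R"
    using bij_betw_unrank[OF assms(1)] .
  have "unrank R ` I = R \<longleftrightarrow> I = {1..card R}"
    using inj_on_image_eq_iff[OF bij_betw_imp_inj_on[OF bij] True, of "{1..card R}"]
      bij_betw_imp_surj_on[OF bij] by auto
  moreover have "convex_in R (unrank R ` I) \<longleftrightarrow> convex_in {1..card R} I"
    using convex_in_image[OF strict_mono_on_unrank[OF assms(1)] True] bij_betw_imp_surj_on[OF bij]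
    by simp
  moreover have "unrank R ` I \<subseteq> R"
    using True bij_betw_imp_surj_on[OF bij] by blast
  ultimately show ?thesis
    unfolding inv_interval_def invariant_in_def
    using interval_iff_convex_in[OF True] std_image_subset_iff[OF assms True] True by auto
qed (auto simp: inv_interval_def)

lemma card_inv_interval:
  assumes "inv_interval a I"
  shows "card I < fst a" "card ({1..fst a} - I) < fst a"
proof -
  have "I \<noteq> {}" "I \<subset> {1..fst a}"
    using assms unfolding inv_interval_def by auto
  then show "card I < fst a" "card ({1..fst a} - I) < fst a"
    using psubset_card_mono[of "{1..fst a}"] by (auto simp: Diff_subset psubset_eq)
qed

lemma comps_aux_eq_comps: "fst a < f \<Longrightarrow> comps_aux f a = comps a"
proof (induction f arbitrary: a rule: less_induct)
  case (less f)
  obtain g where f: "f = Suc g"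
    using less.prems by (cases f) auto
  show ?case
  proof (cases "fst a = 0 \<or> connected_perm a")
    case True
    then show ?thesis
      unfolding f comps_def by auto
  next
    case False
    define I where "I = (SOME I. inv_interval a I)"
    have "inv_interval a I"
      using False someI_ex[of "inv_interval a"] unfolding I_def connected_perm_def by blast
    then have small: "fst (restr a I) < fst a" "fst (restr a ({1..fst a} - I)) < fst a"
      using card_inv_interval by (simp_all add: restr_def std_def)
    have "comps_aux f a = comps_aux g (restr a I) + comps_aux g (restr a ({1..fst a} - I))"
      using False unfolding f I_def by (simp add: Let_def)
    also have "\<dots> = comps_aux (fst a) (restr a I) + comps_aux (fst a) (restr a ({1..fst a} - I))"
      using less.IH small less.prems unfolding f by simp
    also have "\<dots> = comps a"
      using False unfolding comps_def I_def by (simp add: Let_def)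
    finally show ?thesis .
  qed
qed

lemma comps_empty: "fst a = 0 \<Longrightarrow> comps a = {#}"
  by (simp add: comps_def)

lemma comps_connected: "connected_perm a \<Longrightarrow> fst a \<noteq> 0 \<Longrightarrow> comps a = {#a#}"
  by (simp add: comps_def)

lemma comps_not_connected:
  assumes "\<not> connected_perm a"
  obtains I where "inv_interval a I"
    and "comps a = comps (restr a I) + comps (restr a ({1..fst a} - I))"
proof -
  define I where "I = (SOME I. inv_interval a I)"
  have I: "inv_interval a I"
    using assms someI_ex[of "inv_interval a"] unfolding I_def connected_perm_def by blast
  then have "fst a \<noteq> 0"
    unfolding inv_interval_def by auto
  then have "comps a = comps_aux (fst a) (restr a I) + comps_aux (fst a) (restr a ({1..fst a} - I))"
    using assms unfolding comps_def I_def by (simp add: Let_def)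
  also have "\<dots> = comps (restr a I) + comps (restr a ({1..fst a} - I))"
    using card_inv_interval[OF I] comps_aux_eq_comps by (simp add: restr_def std_def)
  finally show ?thesis
    using that I by blast
qed

section \<open>Adding a point to a partition\<close>

definition moebius :: "nat \<Rightarrow> int" where
  "moebius k = (-1) ^ (k - 1) * fact (k - 1)"

lemma moebius_Suc: "k \<ge> 1 \<Longrightarrow> moebius (Suc k) = - int k * moebius k"
  by (cases k) (simp_all add: moebius_def algebra_simps)

definition same_block :: "'a set set \<Rightarrow> 'a \<Rightarrow> 'a \<Rightarrow> bool" where
  "same_block P x y \<longleftrightarrow> (\<exists>L\<in>P. x \<in> L \<and> y \<in> L)"

text \<open>Adding \<open>c\<close> to the block \<open>{}\<close> creates the new block \<open>{c}\<close>, so the extensions of \<open>Q\<close> by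
  \<open>c\<close> are indexed by \<open>insert {} Q\<close>.\<close>

definition add_to_block :: "'a \<Rightarrow> 'a set \<Rightarrow> 'a set set \<Rightarrow> 'a set set" where
  "add_to_block c L Q = insert (insert c L) (Q - {L})"

definition remove_point :: "'a \<Rightarrow> 'a set set \<Rightarrow> 'a set set" where
  "remove_point c P = (\<lambda>L. L - {c}) ` P - {{}}"

definition extensions :: "'a \<Rightarrow> 'a set \<Rightarrow> 'a set set \<Rightarrow> 'a set set set" where
  "extensions c V Q = {P. partition_on (insert c V) P \<and> remove_point c P = Q}"

lemma partition_on_block_eq:
  "partition_on A P \<Longrightarrow> L \<in> P \<Longrightarrow> M \<in> P \<Longrightarrow> x \<in> L \<Longrightarrow> x \<in> M \<Longrightarrow> L = M"
  unfolding partition_on_def disjoint_def by blast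

lemma partition_on_remove_point: "partition_on A P \<Longrightarrow> partition_on (A - {c}) (remove_point c P)"
  unfolding remove_point_def
  using partition_on_transform[of A P "\<lambda>L. L - {c}"] by (auto simp: disjnt_def)

lemma partition_on_add_to_block:
  assumes Q: "partition_on V Q" and c: "c \<notin> V" and L: "L \<in> insert {} Q"
  shows "partition_on (insert c V) (add_to_block c L Q)"
proof -
  have "partition_on (V - L) (Q - {L})"
  proof (cases "L = {}")
    case True
    then show ?thesis
      using Q partition_onD3[OF Q] by simp
  next
    case False
    then have "L \<in> Q" "Q = insert L (Q - {L})"
      using L by auto
    moreover have "disjnt L (\<Union>(Q - {L}))"
      using partition_onD2[OF Q] \<open>L \<in> Q\<close> by (auto simp: disjnt_def disjoint_def)
    ultimately show ?thesis
      using Q partition_on_insert[of L "Q - {L}" V] by simp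
  qed
  moreover have "disjnt (insert c L) (\<Union>(Q - {L}))"
    using partition_onD1[OF Q] partition_onD2[OF Q] c L by (auto simp: disjnt_def disjoint_def)
  moreover have "insert c V - insert c L = V - L" "insert c L \<subseteq> insert c V"
    using partition_onD1[OF Q] c L by auto
  ultimately show ?thesis
    unfolding add_to_block_def by (simp add: partition_on_insert)
qed

lemma card_add_to_block:
  assumes "finite Q" "c \<notin> \<Union>Q" "{} \<notin> Q" "L \<in> insert {} Q"
  shows "card (add_to_block c L Q) = (if L = {} then Suc (card Q) else card Q)"
proof -
  have "insert c L \<notin> Q - {L}"
    using assms(2) by blast
  then have "card (add_to_block c L Q) = Suc (card (Q - {L}))"
    unfolding add_to_block_def using assms(1) by simp
  moreover have "Suc (card (Q - {L})) = card Q" if "L \<in> Q"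
    using that assms(1) card_Diff1_less[OF assms(1) that] by (simp add: card_Diff_singleton)
  ultimately show ?thesis
    using assms(3,4) by auto
qed

lemma remove_point_add_to_block:
  assumes "c \<notin> \<Union>Q" "{} \<notin> Q" "L \<in> insert {} Q"
  shows "remove_point c (add_to_block c L Q) = Q"
proof -
  have "(\<lambda>M. M - {c}) ` (Q - {L}) = Q - {L}"
    using assms(1) by (force simp: image_iff)
  moreover have "insert c L - {c} = L"
    using assms by auto
  ultimately show ?thesis
    unfolding remove_point_def add_to_block_def using assms(2,3) by auto
qed

lemma remove_point_block:
  assumes P: "partition_on A P" and K: "K \<in> P" "c \<in> K"
  shows "remove_point c P = insert (K - {c}) (P - {K}) - {{}}"
proof -
  have "M - {c} = M" if M: "M \<in> P - {K}" for M
  proof -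
    have "c \<notin> M"
      using partition_on_block_eq[OF P _ K(1) _ K(2), of M] M by blast
    then show ?thesis
      by simp
  qed
  then have "(\<lambda>M. M - {c}) ` (P - {K}) = (\<lambda>M. M) ` (P - {K})"
    by (rule image_cong[OF refl])
  moreover have "(\<lambda>M. M - {c}) ` P = insert (K - {c}) ((\<lambda>M. M - {c}) ` (P - {K}))"
    using K(1) by blast
  ultimately show ?thesis
    by (simp add: remove_point_def)
qed

lemma add_to_block_remove_point:
  assumes P: "partition_on (insert c V) P" and c: "c \<notin> V"
  obtains L where "L \<in> insert {} (remove_point c P)" "P = add_to_block c L (remove_point c P)"
proof -
  obtain K where K: "K \<in> P" "c \<in> K"
    using partition_onD1[OF P] by blast
  note removed = remove_point_block[OF P K]
  have empty: "{} \<notin> P"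
    using partition_onD3[OF P] .
  have "K - {c} \<notin> P - {K}"
  proof
    assume in_P: "K - {c} \<in> P - {K}"
    then have "K - {c} \<noteq> {}"
      using empty by (metis DiffD1)
    then obtain x where x: "x \<in> K - {c}"
      by auto
    have "K - {c} = K"
      by (rule partition_on_block_eq[OF P _ K(1)]) (use in_P x in auto)
    then show False
      using K(2) by auto
  qed
  then have "remove_point c P - {K - {c}} = P - {K}"
    unfolding removed using empty by blast
  moreover have "insert c (K - {c}) = K"
    using K(2) by blast
  ultimately have "add_to_block c (K - {c}) (remove_point c P) = insert K (P - {K})"
    unfolding add_to_block_def by simp
  also have "\<dots> = P"
    using K(1) by blast
  finally have "P = add_to_block c (K - {c}) (remove_point c P)"
    by (rule sym)
  moreover have "K - {c} \<in> insert {} (remove_point c P)"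
    unfolding removed by blast
  ultimately show ?thesis
    using that by blast
qed

lemma inj_on_add_to_block:
  assumes "c \<notin> \<Union>Q"
  shows "inj_on (\<lambda>L. add_to_block c L Q) (insert {} Q)"
proof (rule inj_onI)
  fix L L'
  assume L: "L \<in> insert {} Q" and L': "L' \<in> insert {} Q"
    and eq: "add_to_block c L Q = add_to_block c L' Q"
  have "insert c L \<in> add_to_block c L' Q"
    using eq unfolding add_to_block_def by auto
  then have "insert c L = insert c L'"
    using assms unfolding add_to_block_def by auto
  moreover have "c \<notin> L" "c \<notin> L'"
    using assms L L' by auto
  ultimately show "L = L'"
    by (metis Diff_insert_absorb)
qed

lemma bij_betw_add_to_block:
  assumes "partition_on V Q" "c \<notin> V"
  shows "bij_betw (\<lambda>L. add_to_block c L Q) (insert {} Q) (extensions c V Q)"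
proof (rule bij_betw_imageI)
  have c: "c \<notin> \<Union>Q" and empty: "{} \<notin> Q"
    using assms partition_onD1 partition_onD3 by blast+
  show "inj_on (\<lambda>L. add_to_block c L Q) (insert {} Q)"
    using inj_on_add_to_block[OF c] .
  show "(\<lambda>L. add_to_block c L Q) ` insert {} Q = extensions c V Q"
  proof
    show "(\<lambda>L. add_to_block c L Q) ` insert {} Q \<subseteq> extensions c V Q"
      unfolding extensions_def
      using partition_on_add_to_block[OF assms] remove_point_add_to_block[OF c empty] by blast
    show "extensions c V Q \<subseteq> (\<lambda>L. add_to_block c L Q) ` insert {} Q"
      unfolding extensions_def using add_to_block_remove_point[OF _ assms(2)] by blast
  qed
qed

lemma sum_moebius_extensions:
  assumes "partition_on V Q" "finite V" "V \<noteq> {}" "c \<notin> V"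
  shows "(\<Sum>P\<in>extensions c V Q. moebius (card P)) = 0"
proof -
  have c: "c \<notin> \<Union>Q" and empty: "{} \<notin> Q"
    using assms partition_onD1 partition_onD3 by blast+
  have fin: "finite Q"
    using finite_elements[OF assms(2,1)] .
  have "Q \<noteq> {}"
    using partition_onD1[OF assms(1)] assms(3) by auto
  then have "card Q \<ge> 1"
    using fin by (simp add: Suc_le_eq card_gt_0_iff)
  have "(\<Sum>P\<in>extensions c V Q. moebius (card P))
      = (\<Sum>L\<in>insert {} Q. moebius (card (add_to_block c L Q)))"
    using sum.reindex_bij_betw[OF bij_betw_add_to_block[OF assms(1,4)], of "\<lambda>P. moebius (card P)"]
    by (rule sym)
  also have "\<dots> = moebius (Suc (card Q)) + (\<Sum>L\<in>Q. moebius (card Q))"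
  proof -
    have "L \<noteq> {}" if "L \<in> Q" for L
      using that empty by blast
    then have "(\<Sum>L\<in>Q. moebius (card (add_to_block c L Q))) = (\<Sum>L\<in>Q. moebius (card Q))"
      using card_add_to_block[OF fin c empty] by simp
    then show ?thesis
      using fin empty card_add_to_block[OF fin c empty] by simp
  qed
  also have "\<dots> = 0"
    using moebius_Suc[OF \<open>card Q \<ge> 1\<close>] by simp
  finally show ?thesis .
qed

lemma same_block_add_to_block:
  assumes Q: "partition_on V Q" and c: "c \<notin> V" and K: "K \<in> Q" "a \<in> K"
    and L: "L \<in> insert {} Q"
  shows "same_block (add_to_block c L Q) a c \<longleftrightarrow> L = K"
proof
  assume "same_block (add_to_block c L Q) a c"
  then obtain M where M: "M \<in> add_to_block c L Q" "a \<in> M" "c \<in> M"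
    unfolding same_block_def by blast
  have "c \<notin> \<Union>Q"
    using Q c partition_onD1 by blast
  then have "M = insert c L"
    using M unfolding add_to_block_def by auto
  moreover have "a \<noteq> c"
    using K Q c partition_onD1 by blast
  ultimately have "a \<in> L"
    using M by auto
  then have "L \<in> Q"
    using L by auto
  then show "L = K"
    using partition_on_block_eq[OF Q _ K(1) \<open>a \<in> L\<close> K(2)] by simp
qed (auto simp: same_block_def add_to_block_def K)

lemma same_block_sym: "same_block P x y \<longleftrightarrow> same_block P y x"
  by (auto simp: same_block_def)

lemma same_block_remove_point:
  assumes "z \<noteq> c" "w \<noteq> c"
  shows "same_block (remove_point c P) z w \<longleftrightarrow> same_block P z w"
proof
  show "same_block (remove_point c P) z w \<Longrightarrow> same_block P z w"
    unfolding same_block_def remove_point_def by auto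
next
  assume "same_block P z w"
  then obtain L where L: "L \<in> P" "z \<in> L" "w \<in> L"
    unfolding same_block_def by blast
  show "same_block (remove_point c P) z w"
    unfolding same_block_def
  proof (rule bexI[of _ "L - {c}"])
    show "z \<in> L - {c} \<and> w \<in> L - {c}"
      using L assms by simp
    show "L - {c} \<in> remove_point c P"
      unfolding remove_point_def using L assms by auto
  qed
qed

lemma finite_extensions: "finite V \<Longrightarrow> finite (extensions c V Q)"
  using finite_subset[OF _ finitely_many_partition_on[of "insert c V"]] by (auto simp: extensions_def)

lemma sum_moebius_extensions_separating:
  assumes Q: "partition_on W Q" and W: "finite W" "a \<in> W" "c \<notin> W"
  shows "(\<Sum>P\<in>extensions c W Q - {P. same_block P a c}. moebius (card P)) = - moebius (card Q)"
proof -
  let ?F = "extensions c W Q"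
  obtain K where K: "K \<in> Q" "a \<in> K"
    using partition_onD1[OF Q] W(2) by blast
  have "?F = (\<lambda>L. add_to_block c L Q) ` insert {} Q"
    using bij_betw_add_to_block[OF Q W(3)] by (simp add: bij_betw_def)
  then have joined: "?F \<inter> {P. same_block P a c} = {add_to_block c K Q}"
    using same_block_add_to_block[OF Q W(3) K] K(1) by auto
  have "card (add_to_block c K Q) = card Q"
  proof -
    have "finite Q" "c \<notin> \<Union>Q"
      using finite_elements[OF W(1) Q] partition_onD1[OF Q] W(3) by auto
    moreover have "K \<in> insert {} Q" "K \<noteq> {}"
      using K by auto
    ultimately show ?thesis
      using card_add_to_block[OF _ _ partition_onD3[OF Q]] by simp
  qed
  moreover have "?F - {P. same_block P a c} = ?F - {add_to_block c K Q}"
    using joined by blast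
  moreover have "add_to_block c K Q \<in> ?F"
    using joined by blast
  moreover have "(\<Sum>P\<in>?F. moebius (card P)) = 0"
    using sum_moebius_extensions[OF Q W(1) _ W(3)] W(2) by blast
  ultimately show ?thesis
    using sum.remove[OF finite_extensions[OF W(1)], where x = "add_to_block c K Q" and g = "\<lambda>P. moebius (card P)"]
    by simp
qed

text \<open>Group by the partition obtained by deleting \<open>b\<close>: placing \<open>b\<close> anywhere except
  into the block of \<open>a\<close> contributes \<open>- moebius\<close> of that partition, and summing this
  over all placements of \<open>a\<close> gives \<open>0\<close> again.\<close>

lemma sum_moebius_separating_extensions:
  assumes P': "partition_on V P'" and V: "finite V" "V \<noteq> {}" and ab: "a \<notin> V" "b \<notin> V" "a \<noteq> b"
  shows "(\<Sum>P | partition_on (insert b (insert a V)) P \<and> remove_point a (remove_point b P) = P'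
            \<and> \<not> same_block P a b. moebius (card P)) = 0"
proof -
  define S where "S = {P. partition_on (insert b (insert a V)) P
    \<and> remove_point a (remove_point b P) = P' \<and> \<not> same_block P a b}"
  let ?E = "extensions a V P'"
  have b: "b \<notin> insert a V"
    using ab by simp
  have "finite {P. partition_on (insert b (insert a V)) P}"
    using V by (simp add: finitely_many_partition_on)
  then have fin_S: "finite S"
    by (rule finite_subset[rotated]) (auto simp: S_def)
  have "insert b (insert a V) - {b} = insert a V"
    using b by auto
  then have into: "remove_point b ` S \<subseteq> ?E"
    using partition_on_remove_point[of "insert b (insert a V)" _ b] by (auto simp: S_def extensions_def)
  have "{P\<in>S. remove_point b P = Q} = extensions b (insert a V) Q - {P. same_block P a b}"
    if "Q \<in> ?E" for Q
    using that by (auto simp: S_def extensions_def)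
  then have inner: "(\<Sum>P\<in>{P\<in>S. remove_point b P = Q}. moebius (card P)) = - moebius (card Q)"
    if "Q \<in> ?E" for Q
    using that sum_moebius_extensions_separating[of "insert a V" Q a b] V b
    by (simp add: extensions_def)
  have "(\<Sum>P\<in>S. moebius (card P)) = (\<Sum>Q\<in>?E. \<Sum>P\<in>{P\<in>S. remove_point b P = Q}. moebius (card P))"
    by (rule sum.group[OF fin_S finite_extensions[OF V(1)] into, symmetric])
  also have "\<dots> = - (\<Sum>Q\<in>?E. moebius (card Q))"
    using inner by (simp add: sum_negf)
  also have "\<dots> = 0"
    using sum_moebius_extensions[OF P' V ab(1)] by simp
  finally show ?thesis
    unfolding S_def .
qed

section \<open>Partitions coarser than a given partition\<close>

lemma inj_on_Union_partition:
  assumes Q0: "partition_on A Q0" and Q: "partition_on Q0 Q"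
  shows "inj_on Union Q"
proof (rule inj_onI)
  fix I J
  assume I: "I \<in> Q" and J: "J \<in> Q" and eq: "\<Union>I = \<Union>J"
  have "I \<noteq> {}"
    using partition_onD3[OF Q] I by blast
  then obtain c where c: "c \<in> I"
    by blast
  have c_Q0: "c \<in> Q0"
    using partition_onD1[OF Q] I c by blast
  then obtain x where x: "x \<in> c"
    using partition_onD3[OF Q0] by (metis ex_in_conv)
  then obtain d where d: "d \<in> J" "x \<in> d"
    using eq c by blast
  have "d \<in> Q0"
    using partition_onD1[OF Q] J d(1) by blast
  then have "c = d"
    using partition_on_block_eq[OF Q0 c_Q0 _ x d(2)] by simp
  then show "I = J"
    using partition_on_block_eq[OF Q I J c] d(1) by simp
qed

lemma Union_blocks_refines:
  assumes "refines A Q0 P" "L \<in> P"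
  shows "\<Union>{c\<in>Q0. c \<subseteq> L} = L"
  using partition_onD1[OF refines_obtains_subset[OF assms]] by simp

lemma blocks_below_Union:
  assumes Q0: "partition_on A Q0" and Q: "partition_on Q0 Q" and I: "I \<in> Q"
  shows "{c\<in>Q0. c \<subseteq> \<Union>I} = I"
proof
  show "I \<subseteq> {c\<in>Q0. c \<subseteq> \<Union>I}"
    using partition_onD1[OF Q] I by blast
  show "{c\<in>Q0. c \<subseteq> \<Union>I} \<subseteq> I"
  proof clarify
    fix c
    assume c: "c \<in> Q0" "c \<subseteq> \<Union>I"
    then obtain x where x: "x \<in> c"
      using partition_onD3[OF Q0] by (metis ex_in_conv)
    then obtain d where d: "d \<in> I" "x \<in> d"
      using c by blast
    have "d \<in> Q0"
      using partition_onD1[OF Q] I d(1) by blast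
    then have "c = d"
      using partition_on_block_eq[OF Q0 c(1) _ x d(2)] by simp
    then show "c \<in> I"
      using d(1) by simp
  qed
qed

lemma partition_on_Union_image:
  assumes Q0: "partition_on A Q0" and Q: "partition_on Q0 Q"
  shows "partition_on A (Union ` Q)"
proof -
  have in_Q0: "c \<in> Q0" if "c \<in> I" "I \<in> Q" for c I
    using partition_onD1[OF Q] that by blast
  have disjnt_Union: "disjnt (\<Union>I) (\<Union>J)" if IJ: "I \<in> Q" "J \<in> Q" "disjnt I J" for I J
  proof -
    have "c \<inter> d = {}" if "c \<in> I" "d \<in> J" for c d
    proof (rule disjointD[OF partition_onD2[OF Q0]])
      show "c \<in> Q0" "d \<in> Q0"
        using in_Q0 that IJ by auto
      show "c \<noteq> d"
        using that IJ(3) by (auto simp: disjnt_def)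
    qed
    then show ?thesis
      unfolding disjnt_def by blast
  qed
  have "partition_on (\<Union>Q0) (Union ` Q - {{}})"
    by (rule partition_on_transform[OF Q]) (use disjnt_Union partition_onD1[OF Q] in auto)
  moreover have "{} \<notin> Union ` Q"
  proof
    assume "{} \<in> Union ` Q"
    then obtain I where I: "I \<in> Q" "\<Union>I = {}"
      by auto
    then obtain c where "c \<in> I"
      using partition_onD3[OF Q] by (metis ex_in_conv)
    then show False
      using in_Q0 I partition_onD3[OF Q0] by auto
  qed
  ultimately show ?thesis
    using partition_onD1[OF Q0] by simp
qed

lemma refines_Union_image:
  assumes Q0: "partition_on A Q0" and Q: "partition_on Q0 Q"
  shows "refines A Q0 (Union ` Q)"
proof -
  have "\<exists>L\<in>Union ` Q. c \<subseteq> L" if c: "c \<in> Q0" for c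
  proof -
    obtain I where "I \<in> Q" "c \<in> I"
      using partition_onD1[OF Q] c by blast
    then show ?thesis
      by blast
  qed
  then show ?thesis
    unfolding refines_def using Q0 partition_on_Union_image[OF Q0 Q] by blast
qed

lemma partition_on_blocks_below:
  assumes Q0: "partition_on A Q0" and ref: "refines A Q0 P"
  shows "partition_on Q0 ((\<lambda>L. {c\<in>Q0. c \<subseteq> L}) ` P)"
proof (rule partition_onI)
  have P: "partition_on A P" and coarse: "\<forall>c\<in>Q0. \<exists>L\<in>P. c \<subseteq> L"
    using ref unfolding refines_def by auto
  show "\<Union>((\<lambda>L. {c\<in>Q0. c \<subseteq> L}) ` P) = Q0"
    using coarse by blast
  fix p q
  assume p: "p \<in> (\<lambda>L. {c\<in>Q0. c \<subseteq> L}) ` P" and q: "q \<in> (\<lambda>L. {c\<in>Q0. c \<subseteq> L}) ` P"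
    and "p \<noteq> q"
  obtain L where L: "L \<in> P" "p = {c\<in>Q0. c \<subseteq> L}"
    using p by blast
  obtain M where M: "M \<in> P" "q = {c\<in>Q0. c \<subseteq> M}"
    using q by blast
  have "L \<noteq> M"
    using L M \<open>p \<noteq> q\<close> by auto
  then have "L \<inter> M = {}"
    using disjointD[OF partition_onD2[OF P] L(1) M(1)] by simp
  show "disjnt p q"
    unfolding disjnt_def
  proof (rule equals0I)
    fix c
    assume "c \<in> p \<inter> q"
    then have "c \<in> Q0" "c \<subseteq> L \<inter> M"
      using L(2) M(2) by auto
    then show False
      using \<open>L \<inter> M = {}\<close> partition_onD3[OF Q0] by auto
  qed
next
  have P: "partition_on A P"
    using ref unfolding refines_def by auto
  show "{} \<notin> (\<lambda>L. {c\<in>Q0. c \<subseteq> L}) ` P"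
  proof
    assume "{} \<in> (\<lambda>L. {c\<in>Q0. c \<subseteq> L}) ` P"
    then obtain L where L: "L \<in> P" "{c\<in>Q0. c \<subseteq> L} = {}"
      by auto
    then have "L = {}"
      using Union_blocks_refines[OF ref L(1)] by (simp only: Union_empty)
    then show False
      using L(1) partition_onD3[OF P] by simp
  qed
qed

lemma bij_betw_Union_refines:
  assumes Q0: "partition_on A Q0"
  shows "bij_betw (image Union) {Q. partition_on Q0 Q} {P. refines A Q0 P}"
proof (rule bij_betw_byWitness[where f' = "image (\<lambda>L. {c\<in>Q0. c \<subseteq> L})"])
  show "\<forall>Q\<in>{Q. partition_on Q0 Q}. (\<lambda>L. {c\<in>Q0. c \<subseteq> L}) ` Union ` Q = Q"
  proof clarify
    fix Q
    assume Q: "partition_on Q0 Q"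
    have "(\<lambda>I. {c\<in>Q0. c \<subseteq> \<Union>I}) ` Q = (\<lambda>I. I) ` Q"
      by (rule image_cong[OF refl]) (rule blocks_below_Union[OF Q0 Q])
    then show "(\<lambda>L. {c\<in>Q0. c \<subseteq> L}) ` Union ` Q = Q"
      by (simp add: image_image)
  qed
  show "\<forall>P\<in>{P. refines A Q0 P}. Union ` (\<lambda>L. {c\<in>Q0. c \<subseteq> L}) ` P = P"
  proof clarify
    fix P
    assume ref: "refines A Q0 P"
    have "(\<lambda>L. \<Union>{c\<in>Q0. c \<subseteq> L}) ` P = (\<lambda>L. L) ` P"
      by (rule image_cong[OF refl]) (rule Union_blocks_refines[OF ref])
    then show "Union ` (\<lambda>L. {c\<in>Q0. c \<subseteq> L}) ` P = P"
      by (simp add: image_image)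
  qed
  show "image Union ` {Q. partition_on Q0 Q} \<subseteq> {P. refines A Q0 P}"
    using refines_Union_image[OF Q0] by blast
  show "image (\<lambda>L. {c\<in>Q0. c \<subseteq> L}) ` {P. refines A Q0 P} \<subseteq> {Q. partition_on Q0 Q}"
    using partition_on_blocks_below[OF Q0] by blast
qed

section \<open>Subdiagrams of an involution\<close>

locale involution =
  fixes B :: "nat \<Rightarrow> nat"
  assumes involutive [simp]: "B (B x) = x"
begin

text \<open>The first-return map of \<open>B\<close> to \<open>S\<close>: an arc with only one end in \<open>S\<close> becomes a fixed
  point.\<close>

definition induced :: "nat set \<Rightarrow> nat \<Rightarrow> nat" where
  "induced S x = (if B x \<in> S then B x else x)"

definition subdiagram :: "nat set \<Rightarrow> perm" where
  "subdiagram S = std S (induced S)"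

definition components :: "nat set \<Rightarrow> perm multiset" where
  "components S = comps (subdiagram S)"

lemma induced_in: "x \<in> S \<Longrightarrow> induced S x \<in> S"
  by (simp add: induced_def)

lemma induced_involutive: "x \<in> S \<Longrightarrow> induced S (induced S x) = x"
  by (simp add: induced_def)

lemma induced_image_subset: "induced S ` S \<subseteq> S"
  using induced_in by blast

lemma induced_subset:
  "T \<subseteq> S \<Longrightarrow> induced T x = (if induced S x \<in> T then induced S x else x)"
  by (auto simp: induced_def)

lemma fst_subdiagram [simp]: "fst (subdiagram S) = card S"
  by (simp add: subdiagram_def)

lemma snd_subdiagram_involutive: "finite S \<Longrightarrow> snd (subdiagram S) (snd (subdiagram S) i) = i"
  unfolding subdiagram_def by (rule snd_std_involution) (simp_all add: induced_in induced_involutive)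

lemma restr_eq_subdiagram: "finite S \<Longrightarrow> restr (m, B) S = subdiagram S"
  unfolding restr_def subdiagram_def
  by (rule std_cong) (simp_all add: first_return_involution induced_def)

lemma restr_subdiagram:
  assumes S: "finite S" and I: "I \<subseteq> {1..card S}"
  shows "restr (subdiagram S) I = subdiagram (unrank S ` I)"
proof -
  let ?p = "snd (subdiagram S)"
  let ?T = "unrank S ` I"
  have fin_I: "finite I"
    using I finite_subset by blast
  have "restr (subdiagram S) I = std I (\<lambda>i. if ?p i \<in> I then ?p i else i)"
    unfolding restr_def
    by (rule std_cong[OF fin_I]) (simp add: first_return_involution snd_subdiagram_involutive[OF S])
  also have "\<dots> = std ?T (induced ?T)"
  proof (rule std_transport[OF fin_I])
    show "strict_mono_on I (unrank S)"
      using monotone_on_subset[OF strict_mono_on_unrank[OF S] I] .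
    show "unrank S (if ?p i \<in> I then ?p i else i) = induced ?T (unrank S i)" if i: "i \<in> I" for i
    proof -
      have i': "i \<in> {1..card S}"
        using i I by blast
      have x: "unrank S i \<in> S"
        using unrank_in[OF S i'] .
      have p_i: "?p i = rank S (induced S (unrank S i))"
        using snd_std[OF i'] by (simp add: subdiagram_def)
      then have unrank_p: "unrank S (?p i) = induced S (unrank S i)"
        using unrank_rank[OF S induced_in[OF x]] by simp
      have "?p i \<in> {1..card S}"
        using p_i rank_in[OF S induced_in[OF x]] by simp
      then have "?p i \<in> I \<longleftrightarrow> induced S (unrank S i) \<in> ?T"
        using inj_on_image_mem_iff[OF bij_betw_imp_inj_on[OF bij_betw_unrank[OF S]] _ I] unrank_p
        by metis
      moreover have "?T \<subseteq> S"
        using unrank_in[OF S] I by blast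
      ultimately show ?thesis
        using induced_subset[of ?T S "unrank S i"] unrank_p by auto
    qed
  qed simp
  finally show ?thesis
    unfolding subdiagram_def .
qed

lemma inv_interval_subdiagram_iff:
  "finite S \<Longrightarrow> inv_interval (subdiagram S) I \<longleftrightarrow>
    I \<subseteq> {1..card S} \<and> unrank S ` I \<noteq> {} \<and> unrank S ` I \<noteq> S \<and> invariant_in S (induced S) (unrank S ` I)"
  unfolding subdiagram_def by (rule inv_interval_std_iff[OF _ induced_image_subset])

lemma connected_subdiagram_iff:
  assumes S: "finite S"
  shows "connected_perm (subdiagram S) \<longleftrightarrow> (\<forall>T. invariant_in S (induced S) T \<longrightarrow> T = {} \<or> T = S)"
proof
  assume connected: "connected_perm (subdiagram S)"
  show "\<forall>T. invariant_in S (induced S) T \<longrightarrow> T = {} \<or> T = S"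
  proof (intro allI impI)
    fix T
    assume T: "invariant_in S (induced S) T"
    show "T = {} \<or> T = S"
    proof (rule ccontr)
      assume proper: "\<not> (T = {} \<or> T = S)"
      have T_S: "T \<subseteq> S"
        using T by (simp add: invariant_in_def)
      have "(\<lambda>x. unrank S (rank S x)) ` T = (\<lambda>x. x) ` T"
        by (rule image_cong[OF refl]) (use T_S unrank_rank[OF S] in auto)
      then have "unrank S ` rank S ` T = T"
        by (simp add: image_image)
      moreover have "rank S ` T \<subseteq> {1..card S}"
        using rank_in[OF S] T_S by blast
      ultimately have "inv_interval (subdiagram S) (rank S ` T)"
        using inv_interval_subdiagram_iff[OF S] T proper by simp
      then show False
        using connected by (simp add: connected_perm_def)
    qed
  qed
next
  assume trivial: "\<forall>T. invariant_in S (induced S) T \<longrightarrow> T = {} \<or> T = S"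
  show "connected_perm (subdiagram S)"
    unfolding connected_perm_def
  proof
    assume "\<exists>I. inv_interval (subdiagram S) I"
    then obtain I where "inv_interval (subdiagram S) I"
      by blast
    then show False
      using trivial inv_interval_subdiagram_iff[OF S, of I] by auto
  qed
qed

lemma components_empty [simp]: "components {} = {#}"
  by (simp add: components_def comps_empty)

lemma components_connected:
  "finite S \<Longrightarrow> S \<noteq> {} \<Longrightarrow> connected_perm (subdiagram S) \<Longrightarrow> components S = {#subdiagram S#}"
  by (simp add: components_def comps_connected)

lemma components_decompose:
  assumes S: "finite S" and not_connected: "\<not> connected_perm (subdiagram S)"
  obtains T where "T \<noteq> {}" "T \<noteq> S" "invariant_in S (induced S) T"
    and "components S = components T + components (S - T)"
proof -
  obtain I where I: "inv_interval (subdiagram S) I"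
    and comps: "comps (subdiagram S) = comps (restr (subdiagram S) I)
      + comps (restr (subdiagram S) ({1..fst (subdiagram S)} - I))"
    by (rule comps_not_connected[OF not_connected])
  have I_sub: "I \<subseteq> {1..card S}"
    using I inv_interval_subdiagram_iff[OF S, of I] by simp
  have bij: "bij_betw (unrank S) {1..card S} S"
    using bij_betw_unrank[OF S] .
  have "unrank S ` ({1..card S} - I) = S - unrank S ` I"
    using inj_on_image_set_diff[OF bij_betw_imp_inj_on[OF bij] _ I_sub] bij_betw_imp_surj_on[OF bij]
    by simp
  then have "components S = components (unrank S ` I) + components (S - unrank S ` I)"
    using comps restr_subdiagram[OF S I_sub] restr_subdiagram[OF S, of "{1..card S} - I"]
    by (simp add: components_def)
  moreover have "unrank S ` I \<noteq> {}" "unrank S ` I \<noteq> S" "invariant_in S (induced S) (unrank S ` I)"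
    using I inv_interval_subdiagram_iff[OF S, of I] by simp_all
  ultimately show ?thesis
    by (intro that)
qed

lemma invariant_in_Int:
  assumes T: "invariant_in S (induced S) T" and R: "R \<subseteq> S"
  shows "invariant_in R (induced R) (R \<inter> T)"
proof -
  have convex: "convex_in S T" and stable: "induced S ` T \<subseteq> T"
    using T by (simp_all add: invariant_in_def)
  have "convex_in R (R \<inter> T)"
    unfolding convex_in_def
  proof (intro ballI impI)
    fix x y z
    assume "x \<in> R" "y \<in> R" "z \<in> R" "x < y" "y < z" "x \<in> R \<inter> T" "z \<in> R \<inter> T"
    then show "y \<in> R \<inter> T"
      using convex_inD[OF convex, of x y z] R by auto
  qed
  moreover have "induced R x \<in> R \<inter> T" if x: "x \<in> R \<inter> T" for x
  proof (cases "B x \<in> R")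
    case True
    have "induced S x \<in> T"
      using stable x by auto
    then show ?thesis
      using True R by (auto simp: induced_def)
  qed (use x in \<open>simp add: induced_def\<close>)
  ultimately show ?thesis
    unfolding invariant_in_def by blast
qed

text \<open>Compare \<open>T\<close> with the interval \<open>T1\<close> chosen by \<open>comps\<close>: by induction both decompositions
  refine to the four pieces cut out by \<open>T\<close> and \<open>T1\<close>.\<close>

lemma components_split:
  assumes "finite S" "invariant_in S (induced S) T"
  shows "components S = components T + components (S - T)"
  using assms
proof (induction "card S" arbitrary: S T rule: less_induct)
  case less
  note S = less.prems(1) and T = less.prems(2)
  consider "T = {}" | "T = S" | "T \<noteq> {}" "T \<noteq> S"
    by blast
  then show ?case
  proof cases
    case 3
    have split_by: "components R = components (R \<inter> T') + components (R - T')"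
      if "R \<subseteq> S" "R \<noteq> S" "invariant_in S (induced S) T'" for R T'
    proof -
      have "card R < card S"
        using that S by (simp add: psubset_card_mono)
      moreover have "finite R"
        using that S finite_subset by blast
      moreover have "R - R \<inter> T' = R - T'"
        by blast
      ultimately show ?thesis
        using less.hyps invariant_in_Int[OF that(3,1)] by metis
    qed
    have "\<not> connected_perm (subdiagram S)"
      using connected_subdiagram_iff[OF S] T 3 by blast
    then obtain T1 where T1: "T1 \<noteq> {}" "T1 \<noteq> S" "invariant_in S (induced S) T1"
      and decomp: "components S = components T1 + components (S - T1)"
      by (rule components_decompose[OF S])
    have T_S: "T \<subseteq> S" and T1_S: "T1 \<subseteq> S"
      using T T1(3) by (simp_all add: invariant_in_def)
    have "S - T \<noteq> S" "S - T1 \<noteq> S"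
      using 3(1) T1(1) T_S T1_S by blast+
    have "components S = components (T1 \<inter> T) + components (T1 - T)
        + (components ((S - T1) \<inter> T) + components (S - T1 - T))"
      using decomp split_by[OF T1_S T1(2) T] split_by[of "S - T1" T] \<open>S - T1 \<noteq> S\<close> T by auto
    also have "\<dots> = components (T \<inter> T1) + components (T - T1)
        + (components ((S - T) \<inter> T1) + components (S - T - T1))"
    proof -
      have "(S - T1) \<inter> T = T - T1" "(S - T) \<inter> T1 = T1 - T" "S - T1 - T = S - T - T1"
        using T_S T1_S by auto
      then show ?thesis
        by (simp add: Int_commute ac_simps)
    qed
    also have "\<dots> = components T + components (S - T)"
      using split_by[OF T_S 3(2) T1(3)] split_by[of "S - T" T1] \<open>S - T \<noteq> S\<close> T1(3) by auto
    finally show ?thesis .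
  qed simp_all
qed

lemma components_singleton: "components {j} = {#point_perm#}"
proof -
  have sub: "subdiagram {j} = point_perm"
    unfolding subdiagram_def by (rule std_singleton) (simp add: induced_def)
  have "connected_perm (subdiagram {j})"
    unfolding connected_perm_def inv_interval_def sub by auto
  then show ?thesis
    using components_connected[of "{j}"] sub by simp
qed

lemma components_insert:
  assumes "finite L" "c \<notin> L" "B c \<notin> L"
  shows "components (insert c L) = add_mset point_perm (components L)"
proof -
  have "invariant_in (insert c L) (induced (insert c L)) {c}"
    using assms(3) unfolding invariant_in_def convex_in_def induced_def by auto
  then have "components (insert c L) = components {c} + components (insert c L - {c})"
    using components_split assms(1) by blast
  then show ?thesis
    using assms(2) components_singleton by simp
qed

lemma components_fpf_involution:
  assumes "finite S" "\<And>x. x \<in> S \<Longrightarrow> B x \<in> S" "\<And>x. x \<in> S \<Longrightarrow> B x \<noteq> x" "a \<in># components S"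
  shows "fpf_involution a"
  using assms
proof (induction "card S" arbitrary: S rule: less_induct)
  case less
  note S = less.prems(1) and closed = less.prems(2) and no_fix = less.prems(3)
  show ?case
  proof (cases "connected_perm (subdiagram S)")
    case True
    moreover have "S \<noteq> {}"
      using less.prems(4) by auto
    ultimately have "a = subdiagram S"
      using less.prems(4) components_connected[OF S] by auto
    moreover have induced_B: "induced S x = B x" if "x \<in> S" for x
      using closed that by (simp add: induced_def)
    have "fpf_involution (std S (induced S))"
      by (rule fpf_involution_std[OF S]) (simp_all add: induced_B closed no_fix)
    ultimately show ?thesis
      by (simp add: subdiagram_def)
  next
    case False
    then obtain T where T: "T \<noteq> {}" "T \<noteq> S" "invariant_in S (induced S) T"
      and decomp: "components S = components T + components (S - T)"
      by (rule components_decompose[OF S])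
    have T_S: "T \<subseteq> S"
      using T(3) by (simp add: invariant_in_def)
    have T_closed: "B x \<in> T" if "x \<in> T" for x
      using T(3) closed that T_S unfolding invariant_in_def induced_def by auto
    have rest_closed: "B x \<in> S - T" if "x \<in> S - T" for x
      using T_closed[of "B x"] closed that by auto
    have "card T < card S" "card (S - T) < card S"
      using T T_S S by (auto intro!: psubset_card_mono)
    moreover have "finite T" "finite (S - T)"
      using T_S S finite_subset by auto
    moreover have "a \<in># components T \<or> a \<in># components (S - T)"
      using less.prems(4) decomp by simp
    ultimately show ?thesis
      using less.hyps[of T] less.hyps[of "S - T"] T_closed rest_closed no_fix T_S by blast
  qed
qed

lemma cycles_eq: "cycles (m, B) = (\<lambda>x. {x, B x}) ` {1..m}"
proof -
  have "(B ^^ k) x = (if even k then x else B x)" for k x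
    by (induction k) auto
  then have "{(B ^^ k) x |k. True} = {x, B x}" for x
    by (auto intro: exI[of _ 0] exI[of _ 1])
  then show ?thesis
    unfolding cycles_def by auto
qed

end

section \<open>Arc diagrams\<close>

abbreviation point_class :: "perm set" where
  "point_class \<equiv> rotclass point_perm"

locale arc_diagram = involution +
  fixes U :: "nat set"
  assumes finite_U: "finite U"
    and B_in_U: "x \<in> U \<Longrightarrow> B x \<in> U"
    and no_fixed_point: "x \<in> U \<Longrightarrow> B x \<noteq> x"
begin

definition arcs :: "nat set set" where
  "arcs = (\<lambda>x. {x, B x}) ` U"

definition monomial :: "nat set set \<Rightarrow> perm set multiset" where
  "monomial P = (\<Sum>L\<in>P. bracket (subdiagram L))"

definition contribution :: "perm set multiset \<Rightarrow> nat set set \<Rightarrow> int" where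
  "contribution N P = moebius (card P) * (if monomial P = N then 1 else 0)"

definition remove_arc :: "nat \<Rightarrow> nat set set \<Rightarrow> nat set set" where
  "remove_arc a P = remove_point a (remove_point (B a) P)"

definition first_split :: "nat set set \<Rightarrow> nat" where
  "first_split P = (LEAST x. x \<in> U \<and> \<not> same_block P x (B x))"

lemma arc_eq: "z \<in> {x, B x} \<Longrightarrow> {x, B x} = {z, B z}"
  by auto

lemma partition_on_arcs: "partition_on U arcs"
proof (rule partition_onI)
  show "\<Union>arcs = U"
    unfolding arcs_def using B_in_U by auto
  fix p q
  assume "p \<in> arcs" "q \<in> arcs" "p \<noteq> q"
  then obtain x y where "p = {x, B x}" "q = {y, B y}" "{x, B x} \<noteq> {y, B y}"
    unfolding arcs_def by blast
  then show "disjnt p q"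
    unfolding disjnt_def using arc_eq by blast
qed (auto simp: arcs_def)

lemma refines_arcs_iff: "refines U arcs P \<longleftrightarrow> partition_on U P \<and> (\<forall>x\<in>U. same_block P x (B x))"
  using partition_on_arcs by (auto simp: refines_def arcs_def same_block_def)

lemma bracket_subdiagram_insert:
  assumes "finite L" "c \<notin> L" "B c \<notin> L"
  shows "bracket (subdiagram (insert c L)) = add_mset point_class (bracket (subdiagram L))"
  using components_insert[OF assms] by (simp add: bracket_def components_def)

lemma monomial_add_to_block:
  assumes Q: "finite Q" "finite (\<Union>Q)" and c: "c \<notin> \<Union>Q" and L: "L \<in> insert {} Q" "B c \<notin> L"
  shows "monomial (add_to_block c L Q) = add_mset point_class (monomial Q)"
proof -
  have "insert c L \<notin> Q - {L}"
    using c by blast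
  then have "monomial (add_to_block c L Q) = bracket (subdiagram (insert c L)) + monomial (Q - {L})"
    unfolding monomial_def add_to_block_def using Q(1) by simp
  moreover have "L \<subseteq> \<Union>Q"
    using L(1) by blast
  then have "bracket (subdiagram (insert c L)) = add_mset point_class (bracket (subdiagram L))"
    using bracket_subdiagram_insert[OF finite_subset[OF _ Q(2)]] c L(2) by blast
  moreover have "monomial Q = bracket (subdiagram L) + monomial (Q - {L})"
  proof (cases "L \<in> Q")
    case True
    then show ?thesis
      using Q(1) by (simp add: monomial_def sum.remove)
  next
    case False
    then have "L = {}"
      using L(1) by simp
    then show ?thesis
      using False by (simp add: bracket_def components_def[symmetric])
  qed
  ultimately show ?thesis
    by simp
qed

lemma monomial_remove_point:
  assumes P: "partition_on A P" and A: "finite A" "c \<in> A" and split: "\<not> same_block P c (B c)"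
  shows "monomial P = add_mset point_class (monomial (remove_point c P))"
proof -
  let ?Q = "remove_point c P"
  have P': "partition_on (insert c (A - {c})) P"
    using P A by (simp add: insert_absorb)
  obtain L where L: "L \<in> insert {} ?Q" and P_eq: "P = add_to_block c L ?Q"
    by (rule add_to_block_remove_point[OF P']) simp
  have Q: "partition_on (A - {c}) ?Q"
    using partition_on_remove_point[OF P] .
  have "insert c L \<in> add_to_block c L ?Q"
    by (simp add: add_to_block_def)
  then have "insert c L \<in> P"
    by (simp only: P_eq[symmetric])
  then have "B c \<notin> L"
    using split by (auto simp: same_block_def)
  moreover have "\<Union>?Q = A - {c}"
    using partition_onD1[OF Q] by simp
  then have "finite ?Q" "finite (\<Union>?Q)" "c \<notin> \<Union>?Q"
    using finite_elements[OF _ Q] A by auto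
  ultimately have "monomial (add_to_block c L ?Q) = add_mset point_class (monomial ?Q)"
    using monomial_add_to_block L by blast
  then show ?thesis
    by (simp only: P_eq[symmetric])
qed

lemma partition_on_remove_arc:
  assumes "partition_on U P"
  shows "partition_on (U - {a, B a}) (remove_arc a P)"
proof -
  have "partition_on (U - {B a} - {a}) (remove_arc a P)"
    unfolding remove_arc_def by (intro partition_on_remove_point assms)
  moreover have "U - {B a} - {a} = U - {a, B a}"
    by auto
  ultimately show ?thesis
    by simp
qed

lemma monomial_remove_arc:
  assumes P: "partition_on U P" and a: "a \<in> U" and split: "\<not> same_block P a (B a)"
  shows "monomial P = add_mset point_class (add_mset point_class (monomial (remove_arc a P)))"
proof -
  let ?Q = "remove_point (B a) P"
  have Ba: "B a \<in> U" "B a \<noteq> a"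
    using a B_in_U no_fixed_point by auto
  have first: "monomial P = add_mset point_class (monomial ?Q)"
    using monomial_remove_point[OF P finite_U Ba(1)] split same_block_sym[of P a "B a"] by simp
  have Q: "partition_on (U - {B a}) ?Q"
    using partition_on_remove_point[OF P] .
  then have "\<not> same_block ?Q a (B a)"
    using partition_onD1[OF Q] unfolding same_block_def by blast
  moreover have "finite (U - {B a})" "a \<in> U - {B a}"
    using finite_U a Ba by auto
  ultimately have "monomial ?Q = add_mset point_class (monomial (remove_arc a P))"
    using monomial_remove_point[OF Q] by (simp add: remove_arc_def)
  then show ?thesis
    using first by simp
qed

lemma first_split_eq_iff:
  assumes "\<exists>x\<in>U. \<not> same_block P x (B x)"
  shows "first_split P = a \<longleftrightarrow>
    a \<in> U \<and> \<not> same_block P a (B a) \<and> (\<forall>z\<in>U. z < a \<longrightarrow> same_block P z (B z))"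
proof
  assume a: "first_split P = a"
  show "a \<in> U \<and> \<not> same_block P a (B a) \<and> (\<forall>z\<in>U. z < a \<longrightarrow> same_block P z (B z))"
    using LeastI_ex[OF assms[unfolded Bex_def]] not_less_Least[of _ "\<lambda>x. x \<in> U \<and> \<not> same_block P x (B x)"]
    unfolding a[symmetric] first_split_def by blast
next
  assume "a \<in> U \<and> \<not> same_block P a (B a) \<and> (\<forall>z\<in>U. z < a \<longrightarrow> same_block P z (B z))"
  then show "first_split P = a"
    unfolding first_split_def by (intro Least_equality) (auto simp: not_less[symmetric])
qed

lemma first_split_fiber_eq:
  assumes P1: "partition_on U P1" "\<exists>x\<in>U. \<not> same_block P1 x (B x)" "first_split P1 = a"
  shows "{P. partition_on U P \<and> (\<exists>x\<in>U. \<not> same_block P x (B x)) \<and> first_split P = a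
            \<and> remove_arc a P = remove_arc a P1}
       = {P. partition_on U P \<and> remove_arc a P = remove_arc a P1 \<and> \<not> same_block P a (B a)}"
proof (rule Collect_cong)
  fix P
  have a: "a \<in> U" "\<not> same_block P1 a (B a)"
    and below: "\<And>z. z \<in> U \<Longrightarrow> z < a \<Longrightarrow> same_block P1 z (B z)"
    using first_split_eq_iff[OF P1(2)] P1(3) by auto
  have same: "same_block P z (B z) \<longleftrightarrow> same_block P1 z (B z)"
    if removed: "remove_arc a P = remove_arc a P1" and z: "z \<in> U" "z < a" for z
  proof -
    have "z \<noteq> B a"
      using below[OF z] a(2) same_block_sym by (metis involutive)
    then have "z \<noteq> a" "z \<noteq> B a" "B z \<noteq> a" "B z \<noteq> B a"
      using z(2) by (metis involutive less_irrefl)+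
    then have eq: "same_block Q z (B z) \<longleftrightarrow> same_block (remove_arc a Q) z (B z)" for Q
      unfolding remove_arc_def by (simp add: same_block_remove_point)
    show ?thesis
      by (simp only: eq[of P] eq[of P1] removed)
  qed
  show "(partition_on U P \<and> (\<exists>x\<in>U. \<not> same_block P x (B x)) \<and> first_split P = a
      \<and> remove_arc a P = remove_arc a P1)
    \<longleftrightarrow> (partition_on U P \<and> remove_arc a P = remove_arc a P1 \<and> \<not> same_block P a (B a))"
  proof (intro iffI conjI)
    assume "partition_on U P \<and> (\<exists>x\<in>U. \<not> same_block P x (B x)) \<and> first_split P = a
      \<and> remove_arc a P = remove_arc a P1"
    then show "partition_on U P" "remove_arc a P = remove_arc a P1" "\<not> same_block P a (B a)"
      using first_split_eq_iff[of P a] by auto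
  next
    assume P: "partition_on U P \<and> remove_arc a P = remove_arc a P1 \<and> \<not> same_block P a (B a)"
    then have "first_split P = a"
      using first_split_eq_iff[of P a] a(1) same below by auto
    then show "partition_on U P" "\<exists>x\<in>U. \<not> same_block P x (B x)" "first_split P = a"
      "remove_arc a P = remove_arc a P1"
      using P a(1) by auto
  qed
qed

lemma sum_contribution_remove_arc_fiber:
  assumes U: "2 < card U" and a: "a \<in> U" and P': "partition_on (U - {a, B a}) P'"
  shows "(\<Sum>P | partition_on U P \<and> remove_arc a P = P' \<and> \<not> same_block P a (B a). contribution N P) = 0"
proof -
  define V where "V = U - {a, B a}"
  have Ba: "B a \<in> U" "B a \<noteq> a"
    using a B_in_U no_fixed_point by auto
  have U_eq: "insert (B a) (insert a V) = U"
    using a Ba unfolding V_def by auto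
  have "card V = card U - 2"
    unfolding V_def using a Ba finite_U by (simp add: card_Diff_subset)
  then have "V \<noteq> {}"
    using U by auto
  then have V: "finite V" "V \<noteq> {}" "a \<notin> V" "B a \<notin> V"
    using finite_U unfolding V_def by auto
  have "(\<Sum>P | partition_on U P \<and> remove_arc a P = P' \<and> \<not> same_block P a (B a). contribution N P)
      = (if add_mset point_class (add_mset point_class (monomial P')) = N then 1 else 0)
        * (\<Sum>P | partition_on U P \<and> remove_arc a P = P' \<and> \<not> same_block P a (B a). moebius (card P))"
    using monomial_remove_arc[OF _ a]
    by (simp add: contribution_def sum_distrib_left mult.commute)
  also have "\<dots> = 0"
    using sum_moebius_separating_extensions[OF P'[folded V_def] V Ba(2)[symmetric]] U_eq
    by (simp add: remove_arc_def)
  finally show ?thesis .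
qed

lemma sum_contribution_first_split_fiber:
  assumes U: "2 < card U"
    and P1: "partition_on U P1" "\<exists>x\<in>U. \<not> same_block P1 x (B x)" "first_split P1 = a"
  shows "(\<Sum>P | partition_on U P \<and> (\<exists>x\<in>U. \<not> same_block P x (B x)) \<and> first_split P = a
            \<and> remove_arc a P = remove_arc a P1. contribution N P) = 0"
proof -
  have "a \<in> U"
    using first_split_eq_iff[OF P1(2), of a] P1(3) by simp
  then show ?thesis
    using sum_contribution_remove_arc_fiber[OF U _ partition_on_remove_arc[OF P1(1)]]
    by (simp only: first_split_fiber_eq[OF P1])
qed

lemma sum_contribution_splitting:
  assumes U: "2 < card U"
  shows "(\<Sum>P | partition_on U P \<and> \<not> refines U arcs P. contribution N P) = 0"
proof -
  define Split where "Split = {P. partition_on U P \<and> (\<exists>x\<in>U. \<not> same_block P x (B x))}"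
  have "finite {P. partition_on U P}"
    using finitely_many_partition_on[OF finite_U] .
  then have fin: "finite Split"
    by (rule finite_subset[rotated]) (auto simp: Split_def)
  have "(\<Sum>P\<in>Split. contribution N P)
      = (\<Sum>a\<in>first_split ` Split. \<Sum>P\<in>{P\<in>Split. first_split P = a}. contribution N P)"
    by (rule sum.image_gen[OF fin])
  also have "\<dots> = 0"
  proof (rule sum.neutral, rule ballI)
    fix a
    let ?S = "{P\<in>Split. first_split P = a}"
    have "(\<Sum>P\<in>?S. contribution N P)
        = (\<Sum>P'\<in>remove_arc a ` ?S. \<Sum>P\<in>{P\<in>?S. remove_arc a P = P'}. contribution N P)"
      by (rule sum.image_gen) (use fin in simp)
    also have "\<dots> = 0"
    proof (rule sum.neutral, rule ballI)
      fix P'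
      assume "P' \<in> remove_arc a ` ?S"
      then obtain P1 where P1: "P1 \<in> Split" "first_split P1 = a" "P' = remove_arc a P1"
        by blast
      then show "(\<Sum>P\<in>{P\<in>?S. remove_arc a P = P'}. contribution N P) = 0"
        using sum_contribution_first_split_fiber[OF U, of P1 a] by (simp add: Split_def conj_assoc)
    qed
    finally show "(\<Sum>P\<in>?S. contribution N P) = 0" .
  qed
  moreover have "{P. partition_on U P \<and> \<not> refines U arcs P} = Split"
    unfolding Split_def refines_arcs_iff by blast
  ultimately show ?thesis
    by simp
qed

lemma monomial_restr:
  assumes "\<And>L. L \<in> P \<Longrightarrow> L \<subseteq> U"
  shows "(\<Sum>L\<in>P. bracket (restr (m, B) L)) = monomial P"
  unfolding monomial_def
proof (rule sum.cong[OF refl])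
  fix L
  assume "L \<in> P"
  then have "finite L"
    using assms finite_U finite_subset by blast
  then show "bracket (restr (m, B) L) = bracket (subdiagram L)"
    by (simp add: restr_eq_subdiagram)
qed

lemma pi'_A_eq:
  assumes "U = {1..m}"
  shows "pi'_A (m, B) N = (\<Sum>P | partition_on U P. contribution N P)"
proof -
  have "pi'_A (m, B) N = (\<Sum>P | partition_on U P. (-1) ^ (card P - 1) * int (fact (card P - 1))
      * (if (\<Sum>L\<in>P. bracket (restr (m, B) L)) = N then 1 else 0))"
    unfolding pi'_A_def by (simp add: assms)
  also have "\<dots> = (\<Sum>P | partition_on U P. contribution N P)"
  proof (rule sum.cong[OF refl])
    fix P
    assume "P \<in> {P. partition_on U P}"
    then have "(\<Sum>L\<in>P. bracket (restr (m, B) L)) = monomial P"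
      by (intro monomial_restr) (auto simp: partition_on_def)
    then show "(-1) ^ (card P - 1) * int (fact (card P - 1))
        * (if (\<Sum>L\<in>P. bracket (restr (m, B) L)) = N then 1 else 0) = contribution N P"
      by (simp add: contribution_def moebius_def)
  qed
  finally show ?thesis .
qed

lemma pi_A_eq:
  assumes "U = {1..m}"
  shows "pi_A (m, B) N = (\<Sum>P | refines U arcs P. contribution N P)"
proof -
  have "cycles (m, B) = arcs"
    unfolding cycles_eq arcs_def using assms by simp
  then have "pi_A (m, B) N = (\<Sum>Q | partition_on arcs Q. (-1) ^ (card Q - 1) * int (fact (card Q - 1))
      * (if (\<Sum>I\<in>Q. bracket (restr (m, B) (\<Union>I))) = N then 1 else 0))"
    unfolding pi_A_def by simp
  also have "\<dots> = (\<Sum>Q | partition_on arcs Q. contribution N (Union ` Q))"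
  proof (rule sum.cong[OF refl])
    fix Q
    assume "Q \<in> {Q. partition_on arcs Q}"
    then have Q: "partition_on arcs Q"
      by simp
    have inj: "inj_on Union Q"
      using inj_on_Union_partition[OF partition_on_arcs Q] .
    have "L \<subseteq> U" if "L \<in> Union ` Q" for L
      using partition_onD1[OF Q] partition_onD1[OF partition_on_arcs] that by blast
    then have "monomial (Union ` Q) = (\<Sum>L\<in>Union ` Q. bracket (restr (m, B) L))"
      using monomial_restr[of "Union ` Q" m] by simp
    also have "\<dots> = (\<Sum>I\<in>Q. bracket (restr (m, B) (\<Union>I)))"
      by (simp add: sum.reindex[OF inj])
    finally have "monomial (Union ` Q) = (\<Sum>I\<in>Q. bracket (restr (m, B) (\<Union>I)))" .
    then show "(-1) ^ (card Q - 1) * int (fact (card Q - 1))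
        * (if (\<Sum>I\<in>Q. bracket (restr (m, B) (\<Union>I))) = N then 1 else 0) = contribution N (Union ` Q)"
      using card_image[OF inj] by (simp add: contribution_def moebius_def)
  qed
  also have "\<dots> = (\<Sum>P | refines U arcs P. contribution N P)"
    by (rule sum.reindex_bij_betw[OF bij_betw_Union_refines[OF partition_on_arcs]])
  finally show ?thesis .
qed

lemma refines_arcs_monomial_fpf:
  assumes ref: "refines U arcs P" and c: "c \<in># monomial P"
  shows "\<exists>a\<in>c. fpf_involution a"
proof -
  have P: "partition_on U P" and paired: "\<forall>x\<in>U. same_block P x (B x)"
    using ref refines_arcs_iff by auto
  have "finite P"
    using finite_elements[OF finite_U P] .
  then obtain L where L: "L \<in> P" "c \<in># bracket (subdiagram L)"
    using c set_mset_sum[of P "\<lambda>L. bracket (subdiagram L)"] unfolding monomial_def by auto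
  then obtain a where a: "a \<in># components L" "c = rotclass a"
    by (auto simp: bracket_def components_def)
  have L_U: "L \<subseteq> U"
    using P L(1) partition_onD1 by blast
  have "B x \<in> L" if x: "x \<in> L" for x
  proof -
    obtain M where M: "M \<in> P" "x \<in> M" "B x \<in> M"
      using paired x L_U unfolding same_block_def by blast
    then have "M = L"
      using partition_on_block_eq[OF P M(1) L(1) M(2) x] by simp
    then show ?thesis
      using M(3) by simp
  qed
  then have "fpf_involution a"
    using components_fpf_involution[OF _ _ _ a(1)] finite_subset[OF L_U finite_U] no_fixed_point L_U
    by blast
  moreover have "a \<in> rotclass a"
    unfolding rotclass_def by (rule CollectI, rule exI[of _ 0]) simp
  ultimately show ?thesis
    using a(2) by blast
qed

lemma pi_A_eq_pi'_A:
  assumes "U = {1..m}" "2 < card U"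
  shows "pi_A (m, B) N = pi'_A (m, B) N"
proof -
  have "{P. refines U arcs P} \<subseteq> {P. partition_on U P}"
    by (auto simp: refines_def)
  then have "pi'_A (m, B) N = pi_A (m, B) N
      + (\<Sum>P | partition_on U P \<and> \<not> refines U arcs P. contribution N P)"
    using sum.subset_diff[OF _ finitely_many_partition_on[OF finite_U], of _ "contribution N"]
    by (simp add: pi'_A_eq[OF assms(1)] pi_A_eq[OF assms(1)] set_diff_eq)
  then show ?thesis
    using sum_contribution_splitting[OF assms(2)] by simp
qed

lemma pi'_A_nonzero_fpf:
  assumes "U = {1..m}" "2 < card U" "pi'_A (m, B) N \<noteq> 0" "c \<in># N"
  shows "\<exists>a\<in>c. fpf_involution a"
proof -
  have "(\<Sum>P | refines U arcs P. contribution N P) \<noteq> 0"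
    using assms pi_A_eq_pi'_A pi_A_eq by simp
  then obtain P where "refines U arcs P" "contribution N P \<noteq> 0"
    using sum.not_neutral_contains_not_neutral by blast
  then show ?thesis
    using refines_arcs_monomial_fpf assms(4) by (simp add: contribution_def split: if_splits)
qed

end

theorem theorem18:
  fixes n :: nat and B :: "nat \<Rightarrow> nat"
  assumes "n \<ge> 2"
    and "B permutes {1..2*n}"
    and "\<forall>x. B (B x) = x"
    and "\<forall>x\<in>{1..2*n}. B x \<noteq> x"
  shows "pi_A (2*n, B) = pi'_A (2*n, B)
    \<and> (\<forall>N. pi'_A (2*n, B) N \<noteq> 0 \<longrightarrow>
          (\<forall>c\<in>#N. \<exists>a\<in>c. fpf_involution a))"
proof -
  interpret arc_diagram B "{1..2*n}"
    by unfold_locales (use assms permutes_in_image[OF assms(2)] in auto)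
  have "2 < card {1..2*n}"
    using assms(1) by simp
  then show ?thesis
    using pi_A_eq_pi'_A pi'_A_nonzero_fpf by auto
qed

end
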